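(* Let $\phi$ be a norm-to-weak continuous cocycle with respect to $\theta$ on $\mathbb{R}^+\times\Sigma\times X$ such that $(\phi,\theta)$ has a nested bounded pullback absorbing set. Then the following are equivalent: (a) $(\phi,\theta)$ has a pullback attractor; (b) $\phi$ is pullback $\kappa$-contracting; (c) $\phi$ is pullback asymptotically compact.
   Context: Let $X$ be a Banach space with norm $\|\cdot\|$. Let $\Sigma$ be a set and $\theta=\{\theta_t\}_{t\in\mathbb{R}}$ a group of bijections $\theta_t:\Sigma\to\Sigma$ with $\theta_0=\mathrm{id}$ and $\theta_{t+\tau}=\theta_t\circ\theta_\tau$. A cocycle with respect to $\theta$ is a map $\phi:\mathbb{R}^+\times\Sigma\times X\to X$ with $\phi(0,\sigma;x)=x$ and $\phi(s+t,\sigma;x)=\phi(s,\theta_t(\sigma);\phi(t,\sigma;x))$ for all $s,t\ge 0$; it is norm-to-weak continuous if for each $t\ge0$, $\sigma\in\Sigma$, $x_n\to x$ in norm implies $\phi(t,\sigma;x_n)\rightharpoonup\phi(t,\sigma;x)$ weakly in $X$. For $B\subset X$, $\phi(t,\sigma;B)=\{\phi(t,\sigma;x):x\in B\}$, and $\mathrm{dist}_X(A,C)=\sup_{a\in A}\inf_{c\in C}\|a-c\|$. A bounded pullback absorbing set is a family $\{B_\sigma\}_{\sigma\in\Sigma}$ of bounded subsets of $X$ such that for every $\sigma$ and bounded $B\subset X$ there is $T\ge0$ with $\phi(t,\theta_{-t}(\sigma);B)\subset B_\sigma$ for all $t\ge T$; it is nested if moreover $B_{\theta_{-t}(\sigma)}\subset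 B_\sigma$ for all $t\ge0$, $\sigma\in\Sigma$. A pullback attractor is a family $\{\mathcal{A}_\sigma\}_{\sigma\in\Sigma}$ of nonempty compact sets with $\phi(t,\sigma;\mathcal{A}_\sigma)=\mathcal{A}_{\theta_t(\sigma)}$ for all $t\ge0$, $\sigma$, and $\lim_{t\to+\infty}\mathrm{dist}_X(\phi(t,\theta_{-t}(\sigma);B),\mathcal{A}_\sigma)=0$ for every $\sigma$ and bounded $B$. The Kuratowski measure $\kappa(A)=\inf\{\delta>0: A$ has a finite cover by sets of diameter $<\delta\}$; $\phi$ is pullback $\kappa$-contracting if for all $\varepsilon>0$, $\sigma$, bounded $B$ there is $T$ with $\kappa(\phi(t,\theta_{-t}(\sigma);B))\le\varepsilon$ for $t\ge T$. $\phi$ is pullback asymptotically compact if for each $\sigma\in\Sigma$, every bounded sequence $\{x_n\}\subset X$ and every $\{t_n\}\subset\mathbb{R}^+$ with $t_n\to+\infty$, the sequence $\{\phi(t_n,\theta_{-t_n}(\sigma);x_n)\}$ is precompact in $X$. *)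

theory Defs
  imports "HOL-Analysis.Analysis" "HOL-Library.Extended_Real"
begin

definition base_flow :: "(real \<Rightarrow> 's \<Rightarrow> 's) \<Rightarrow> bool" where
  "base_flow \<theta> \<longleftrightarrow> (\<forall>t. bij (\<theta> t)) \<and> \<theta> 0 = id \<and>
     (\<forall>t \<tau>. \<theta> (t + \<tau>) = \<theta> t \<circ> \<theta> \<tau>)"

text \<open>Cocycle; only the values at times t >= 0 are relevant.\<close>
definition cocycle :: "(real \<Rightarrow> 's \<Rightarrow> 's) \<Rightarrow> (real \<Rightarrow> 's \<Rightarrow> 'x \<Rightarrow> 'x) \<Rightarrow> bool" where
  "cocycle \<theta> \<phi> \<longleftrightarrow> (\<forall>\<sigma> x. \<phi> 0 \<sigma> x = x) \<and>
     (\<forall>s t \<sigma> x. 0 \<le> s \<longrightarrow> 0 \<le> t \<longrightarrow> \<phi> (s + t) \<sigma> x = \<phi> s (\<theta> t \<sigma>) (\<phi> t \<sigma> x))"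

definition weakly_converges :: "(nat \<Rightarrow> 'x::real_normed_vector) \<Rightarrow> 'x \<Rightarrow> bool" where
  "weakly_converges xs x \<longleftrightarrow>
     (\<forall>f :: 'x \<Rightarrow> real. bounded_linear f \<longrightarrow> (\<lambda>n. f (xs n)) \<longlonglongrightarrow> f x)"

definition norm_to_weak_continuous :: "(real \<Rightarrow> 's \<Rightarrow> 'x::real_normed_vector \<Rightarrow> 'x) \<Rightarrow> bool" where
  "norm_to_weak_continuous \<phi> \<longleftrightarrow>
     (\<forall>t \<sigma> xs x. 0 \<le> t \<longrightarrow> xs \<longlonglongrightarrow> x \<longrightarrow>
        weakly_converges (\<lambda>n. \<phi> t \<sigma> (xs n)) (\<phi> t \<sigma> x))"

definition hsemidist :: "'x::real_normed_vector set \<Rightarrow> 'x set \<Rightarrow> ereal" where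
  "hsemidist A C = (if A = {} then 0 else (SUP a\<in>A. ereal (infdist a C)))"

definition pullback_absorbing ::
  "(real \<Rightarrow> 's \<Rightarrow> 's) \<Rightarrow> (real \<Rightarrow> 's \<Rightarrow> 'x::real_normed_vector \<Rightarrow> 'x) \<Rightarrow> ('s \<Rightarrow> 'x set) \<Rightarrow> bool" where
  "pullback_absorbing \<theta> \<phi> B \<longleftrightarrow> (\<forall>\<sigma>. bounded (B \<sigma>)) \<and>
     (\<forall>\<sigma> D. bounded D \<longrightarrow> (\<exists>T\<ge>0. \<forall>t\<ge>T. \<phi> t (\<theta> (-t) \<sigma>) ` D \<subseteq> B \<sigma>))"

definition nested :: "(real \<Rightarrow> 's \<Rightarrow> 's) \<Rightarrow> ('s \<Rightarrow> 'x set) \<Rightarrow> bool" where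
  "nested \<theta> B \<longleftrightarrow> (\<forall>t \<sigma>. 0 \<le> t \<longrightarrow> B (\<theta> (-t) \<sigma>) \<subseteq> B \<sigma>)"

definition pullback_attractor ::
  "(real \<Rightarrow> 's \<Rightarrow> 's) \<Rightarrow> (real \<Rightarrow> 's \<Rightarrow> 'x::real_normed_vector \<Rightarrow> 'x) \<Rightarrow> ('s \<Rightarrow> 'x set) \<Rightarrow> bool" where
  "pullback_attractor \<theta> \<phi> A \<longleftrightarrow>
     (\<forall>\<sigma>. A \<sigma> \<noteq> {} \<and> compact (A \<sigma>)) \<and>
     (\<forall>t \<sigma>. 0 \<le> t \<longrightarrow> \<phi> t \<sigma> ` A \<sigma> = A (\<theta> t \<sigma>)) \<and>
     (\<forall>\<sigma> D. bounded D \<longrightarrow>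
        ((\<lambda>t. hsemidist (\<phi> t (\<theta> (-t) \<sigma>) ` D) (A \<sigma>)) \<longlongrightarrow> 0) at_top)"

text \<open>Kuratowski measure of noncompactness, valued in the extended reals
  (infimum of the empty set is +infinity).\<close>
definition kuratowski :: "'a::metric_space set \<Rightarrow> ereal" where
  "kuratowski A = Inf {ereal \<delta> | \<delta>. \<delta> > 0 \<and>
     (\<exists>F. finite F \<and> A \<subseteq> \<Union>F \<and> (\<forall>S\<in>F. bounded S \<and> diameter S < \<delta>))}"

definition pullback_kappa_contracting ::
  "(real \<Rightarrow> 's \<Rightarrow> 's) \<Rightarrow> (real \<Rightarrow> 's \<Rightarrow> 'x::real_normed_vector \<Rightarrow> 'x) \<Rightarrow> bool" where
  "pullback_kappa_contracting \<theta> \<phi> \<longleftrightarrow>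
     (\<forall>\<epsilon>>0. \<forall>\<sigma> D. bounded D \<longrightarrow>
        (\<exists>T. \<forall>t\<ge>T. kuratowski (\<phi> t (\<theta> (-t) \<sigma>) ` D) \<le> ereal \<epsilon>))"

definition pullback_asymptotically_compact ::
  "(real \<Rightarrow> 's \<Rightarrow> 's) \<Rightarrow> (real \<Rightarrow> 's \<Rightarrow> 'x::real_normed_vector \<Rightarrow> 'x) \<Rightarrow> bool" where
  "pullback_asymptotically_compact \<theta> \<phi> \<longleftrightarrow>
     (\<forall>\<sigma> (xs :: nat \<Rightarrow> 'x) (ts :: nat \<Rightarrow> real).
        bounded (range xs) \<longrightarrow> (\<forall>n. 0 \<le> ts n) \<longrightarrow> filterlim ts at_top sequentially \<longrightarrow>
        compact (closure (range (\<lambda>n. \<phi> (ts n) (\<theta> (- ts n) \<sigma>) (xs n)))))"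

end

theory Submission
  imports Defs
begin

text \<open>
  (a) \<open>\<Longrightarrow>\<close> (b): the attractor is compact, and for large \<open>t\<close> the pulled-back image of a
  bounded set lies in a small neighbourhood of it, hence has small Kuratowski measure.

  (b) \<open>\<Longrightarrow>\<close> (c): because the absorbing set is nested, for every \<open>s \<ge> 0\<close> a pullback
  sequence eventually lies in \<open>\<phi>(s, \<theta>\<^sub>-\<^sub>s \<sigma>) B\<^sub>\<sigma>\<close>, whose measure is small for large \<open>s\<close>;
  so its range has measure zero and is precompact.

  (c) \<open>\<Longrightarrow>\<close> (a): the pullback \<open>\<omega>\<close>-limit set of all bounded sets is nonempty, compact and
  attracting by asymptotic compactness. It is invariant because a pullback sequence that converges
  in norm to one point and, by norm-to-weak continuity, weakly to another, forces the two points
  to agree: weak limits are unique by Hahn--Banach, which follows from Zorn's lemma since a minimal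
  sublinear functional is linear.
\<close>

section \<open>Norming functionals\<close>

definition sublinear :: "('a::real_vector \<Rightarrow> real) \<Rightarrow> bool" where
  "sublinear p \<longleftrightarrow> (\<forall>x y. p (x + y) \<le> p x + p y) \<and> (\<forall>c x. 0 \<le> c \<longrightarrow> p (c *\<^sub>R x) = c * p x)"

lemma sublinear_add_le: "sublinear p \<Longrightarrow> p (x + y) \<le> p x + p y"
  unfolding sublinear_def by blast

lemma sublinear_scaleR: "sublinear p \<Longrightarrow> 0 \<le> c \<Longrightarrow> p (c *\<^sub>R x) = c * p x"
  unfolding sublinear_def by blast

lemma sublinear_zero: "sublinear p \<Longrightarrow> p 0 = 0"
  using sublinear_scaleR[of p 0 0] by simp

lemma sublinear_neg_le: "sublinear p \<Longrightarrow> - p (- x) \<le> p x"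
  using sublinear_add_le[of p x "- x"] sublinear_zero[of p] by simp

lemma sublinear_norm: "sublinear norm"
  unfolding sublinear_def by (simp add: norm_triangle_ineq)

lemma linear_if_sublinear_superadditive:
  assumes p: "sublinear p" and super: "\<And>x y. p x + p y \<le> p (x + y)"
  shows "linear p"
proof -
  have add: "p (x + y) = p x + p y" for x y
    using sublinear_add_le[OF p] super by (meson order_antisym)
  have neg: "p (- x) = - p x" for x
    using add[of x "- x"] sublinear_zero[OF p] by simp
  have "p (c *\<^sub>R x) = c * p x" for c x
  proof (cases "0 \<le> c")
    case False
    then have "p (c *\<^sub>R x) = p ((- c) *\<^sub>R (- x))" by simp
    also have "\<dots> = c * p x" using sublinear_scaleR[OF p, of "- c" "- x"] False neg by simp
    finally show ?thesis .
  qed (rule sublinear_scaleR[OF p])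
  then show ?thesis using add by (intro linearI) simp_all
qed

text \<open>A minimal sublinear functional equals each of its reducts and is therefore
  superadditive; this is how Zorn's lemma produces linear functionals below a sublinear one.\<close>
definition sublinear_reduct :: "('a::real_vector \<Rightarrow> real) \<Rightarrow> 'a \<Rightarrow> 'a \<Rightarrow> real" where
  "sublinear_reduct p y x = (INF t\<in>{0..}. p (x + t *\<^sub>R y) - t * p y)"

lemma sublinear_reduct_le:
  assumes p: "sublinear p" and t: "0 \<le> t"
  shows "sublinear_reduct p y x \<le> p (x + t *\<^sub>R y) - t * p y"
  unfolding sublinear_reduct_def
proof (rule cINF_lower)
  show "bdd_below ((\<lambda>t. p (x + t *\<^sub>R y) - t * p y) ` {0..})"
  proof (rule bdd_belowI2)
    fix s :: real assume "s \<in> {0..}"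
    then have "p (s *\<^sub>R y) = s * p y" using sublinear_scaleR[OF p] by simp
    then show "- p (- x) \<le> p (x + s *\<^sub>R y) - s * p y"
      using sublinear_add_le[OF p, of "x + s *\<^sub>R y" "- x"] by simp
  qed
qed (use t in simp)

lemma sublinear_reduct_greatest:
  "(\<And>t. 0 \<le> t \<Longrightarrow> m \<le> p (x + t *\<^sub>R y) - t * p y) \<Longrightarrow> m \<le> sublinear_reduct p y x"
  unfolding sublinear_reduct_def by (rule cINF_greatest) auto

lemma sublinear_reduct_le_self: "sublinear p \<Longrightarrow> sublinear_reduct p y x \<le> p x"
  using sublinear_reduct_le[of p 0] by simp

lemma sublinear_reduct_add_le: "sublinear p \<Longrightarrow> sublinear_reduct p y x + p y \<le> p (x + y)"
  using sublinear_reduct_le[of p 1 y x] by simp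

lemma sublinear_reduct_subadditive:
  assumes p: "sublinear p"
  shows "sublinear_reduct p y (x1 + x2) \<le> sublinear_reduct p y x1 + sublinear_reduct p y x2"
proof -
  let ?r = "sublinear_reduct p y"
  have "?r (x1 + x2) - (p (x1 + s *\<^sub>R y) - s * p y) \<le> ?r x2" if s: "0 \<le> s" for s
  proof (rule sublinear_reduct_greatest)
    fix t :: real assume t: "0 \<le> t"
    have "?r (x1 + x2) \<le> p ((x1 + s *\<^sub>R y) + (x2 + t *\<^sub>R y)) - (s + t) * p y"
      using sublinear_reduct_le[OF p, of "s + t" y "x1 + x2"] s t by (simp add: algebra_simps)
    then show "?r (x1 + x2) - (p (x1 + s *\<^sub>R y) - s * p y) \<le> p (x2 + t *\<^sub>R y) - t * p y"
      using sublinear_add_le[OF p, of "x1 + s *\<^sub>R y" "x2 + t *\<^sub>R y"] by (simp add: algebra_simps)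
  qed
  then have "?r (x1 + x2) - ?r x2 \<le> ?r x1"
    by (intro sublinear_reduct_greatest) (simp add: algebra_simps)
  then show ?thesis by simp
qed

lemma sublinear_reduct_scaleR:
  assumes p: "sublinear p" and c: "0 < c"
  shows "sublinear_reduct p y (c *\<^sub>R x) = c * sublinear_reduct p y x"
proof (rule order_antisym)
  let ?r = "sublinear_reduct p y"
  have "?r (c *\<^sub>R x) / c \<le> ?r x"
  proof (rule sublinear_reduct_greatest)
    fix t :: real assume t: "0 \<le> t"
    have "?r (c *\<^sub>R x) \<le> p (c *\<^sub>R (x + t *\<^sub>R y)) - (c * t) * p y"
      using sublinear_reduct_le[OF p, of "c * t" y "c *\<^sub>R x"] c t by (simp add: algebra_simps)
    also have "c *\<^sub>R (x + t *\<^sub>R y) = c *\<^sub>R x + (c * t) *\<^sub>R y"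
      by (simp add: algebra_simps)
    also have "p (c *\<^sub>R x + (c * t) *\<^sub>R y) = c * p (x + t *\<^sub>R y)"
      using sublinear_scaleR[OF p, of c "x + t *\<^sub>R y"] c by (simp add: algebra_simps)
    finally show "?r (c *\<^sub>R x) / c \<le> p (x + t *\<^sub>R y) - t * p y"
      using c by (simp add: field_simps)
  qed
  then show "?r (c *\<^sub>R x) \<le> c * ?r x" using c by (simp add: field_simps)
  show "c * ?r x \<le> ?r (c *\<^sub>R x)"
  proof (rule sublinear_reduct_greatest)
    fix t :: real assume t: "0 \<le> t"
    have "c * ?r x \<le> c * (p (x + (t / c) *\<^sub>R y) - (t / c) * p y)"
      using sublinear_reduct_le[OF p, of "t / c"] c t by simp
    also have "\<dots> = p (c *\<^sub>R (x + (t / c) *\<^sub>R y)) - t * p y"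
      using sublinear_scaleR[OF p, of c "x + (t / c) *\<^sub>R y"] c by (simp add: right_diff_distrib)
    also have "c *\<^sub>R (x + (t / c) *\<^sub>R y) = c *\<^sub>R x + t *\<^sub>R y"
      using c by (simp add: algebra_simps)
    finally show "c * ?r x \<le> p (c *\<^sub>R x + t *\<^sub>R y) - t * p y" .
  qed
qed

lemma sublinear_sublinear_reduct:
  assumes p: "sublinear p"
  shows "sublinear (sublinear_reduct p y)"
proof -
  have "sublinear_reduct p y 0 = 0"
    using sublinear_reduct_le_self[OF p, of y 0] sublinear_zero[OF p]
      sublinear_reduct_greatest[of 0 p 0 y] sublinear_scaleR[OF p] by force
  then show ?thesis
    unfolding sublinear_def using sublinear_reduct_subadditive[OF p] sublinear_reduct_scaleR[OF p]
    by (metis less_eq_real_def mult_zero_left scale_zero_left)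
qed

lemma INF_chain_subadditive:
  assumes chain: "\<And>q q'. q \<in> C \<Longrightarrow> q' \<in> C \<Longrightarrow> q \<le> q' \<or> q' \<le> q"
    and sub: "\<And>q x y. q \<in> C \<Longrightarrow> q (x + y) \<le> q x + q y"
    and ne: "C \<noteq> {}" and bdd: "\<And>x. bdd_below ((\<lambda>q. q x) ` C)"
  shows "(INF q\<in>C. q (x + y)) \<le> (INF q\<in>C. q x) + (INF q\<in>C. (q y :: real))"
proof -
  let ?l = "\<lambda>x. INF q\<in>C. q x"
  have "?l (x + y) \<le> q x + q' y" if q: "q \<in> C" and q': "q' \<in> C" for q q'
  proof -
    \<comment> \<open>the smaller of \<open>q\<close> and \<open>q'\<close> bounds both terms\<close>
    obtain r where r: "r \<in> C" "r \<le> q" "r \<le> q'"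
      using chain[OF q q'] q q' by auto
    have "?l (x + y) \<le> r x + r y"
      using cINF_lower[OF bdd r(1)] sub[OF r(1)] by (meson order_trans)
    also have "\<dots> \<le> q x + q' y"
      using r by (simp add: le_fun_def add_mono)
    finally show ?thesis .
  qed
  then have "?l (x + y) - q' y \<le> ?l x" if "q' \<in> C" for q'
    using ne that by (intro cINF_greatest) (simp_all add: algebra_simps)
  then have "?l (x + y) - ?l x \<le> ?l y"
    using ne by (intro cINF_greatest) (simp_all add: algebra_simps)
  then show ?thesis by simp
qed

lemma INF_scaleR_homogeneous:
  assumes hom: "\<And>q. q \<in> C \<Longrightarrow> q (c *\<^sub>R x) = c * q x" and c: "0 < c"
    and ne: "C \<noteq> {}" and bdd: "\<And>x. bdd_below ((\<lambda>q. q x) ` C)"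
  shows "(INF q\<in>C. q (c *\<^sub>R x)) = c * (INF q\<in>C. (q x :: real))"
proof -
  let ?l = "\<lambda>x. INF q\<in>C. q x"
  have lower: "?l x \<le> q x" if "q \<in> C" for q x
    by (rule cINF_lower[OF bdd that])
  have "?l (c *\<^sub>R x) / c \<le> ?l x"
    using ne c lower hom by (intro cINF_greatest) (simp_all add: field_simps)
  moreover have "c * ?l x \<le> ?l (c *\<^sub>R x)"
  proof (rule cINF_greatest[OF ne])
    fix q assume q: "q \<in> C"
    show "c * ?l x \<le> q (c *\<^sub>R x)"
      using lower[OF q, of x] hom[OF q] c by simp
  qed
  ultimately show ?thesis using c by (simp add: field_simps)
qed

lemma sublinear_INF_chain:
  assumes ne: "C \<noteq> {}" and sub: "\<And>q. q \<in> C \<Longrightarrow> sublinear q"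
    and chain: "\<And>q q'. q \<in> C \<Longrightarrow> q' \<in> C \<Longrightarrow> q \<le> q' \<or> q' \<le> q"
    and bdd: "\<And>x. bdd_below ((\<lambda>q. q x) ` C)"
  shows "sublinear (\<lambda>x. INF q\<in>C. q x)"
proof -
  have "(INF q\<in>C. q 0) = 0"
    using ne sub by (simp add: sublinear_zero)
  then have "(INF q\<in>C. q (c *\<^sub>R x)) = c * (INF q\<in>C. q x)" if "0 \<le> c" for c x
    using that ne bdd sub INF_scaleR_homogeneous[of C c x] by (cases "c = 0") (auto simp: sublinear_scaleR)
  then show ?thesis
    unfolding sublinear_def using INF_chain_subadditive[OF chain _ ne bdd] sub sublinear_add_le by blast
qed

lemma sublinear_chain_lower_bound:
  assumes C: "C \<subseteq> {q. sublinear q \<and> q \<le> p}" "C \<noteq> {}"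
    and chain: "\<And>q q'. q \<in> C \<Longrightarrow> q' \<in> C \<Longrightarrow> q \<le> q' \<or> q' \<le> q"
  shows "\<exists>l. sublinear l \<and> l \<le> p \<and> (\<forall>q\<in>C. l \<le> q)"
proof -
  have bdd: "bdd_below ((\<lambda>q. q x) ` C)" for x
  proof (rule bdd_belowI2)
    fix q assume "q \<in> C"
    then have "sublinear q" "q (- x) \<le> p (- x)" using C(1) by (auto simp: le_fun_def)
    then show "- p (- x) \<le> q x" using sublinear_neg_le[of q x] by linarith
  qed
  let ?l = "\<lambda>x. INF q\<in>C. q x"
  have "sublinear ?l"
    using C chain bdd by (intro sublinear_INF_chain) auto
  moreover have below: "?l \<le> q" if "q \<in> C" for q
    using cINF_lower[OF bdd that] by (simp add: le_fun_def)
  moreover obtain q where "q \<in> C" using C(2) by blast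
  then have "?l \<le> p" using below C(1) by (blast intro: order_trans)
  ultimately show ?thesis by blast
qed

lemma sublinear_dominates_linear:
  fixes p :: "'a::real_vector \<Rightarrow> real"
  assumes p: "sublinear p"
  shows "\<exists>f. linear f \<and> (\<forall>x. f x \<le> p x)"
proof -
  define A where "A = {q. sublinear q \<and> q \<le> p}"
  have po: "partial_order_on A (relation_of (\<lambda>q q'. q' \<le> q) A)"
    by (rule partial_order_on_relation_ofI) auto
  have "\<exists>u\<in>A. \<forall>q\<in>C. u \<le> q" if C: "C \<in> Chains (relation_of (\<lambda>q q'. q' \<le> q) A)" for C
  proof (cases "C = {}")
    case True
    then show ?thesis using p unfolding A_def by auto
  next
    case False
    moreover have "C \<subseteq> A" "\<And>q q'. q \<in> C \<Longrightarrow> q' \<in> C \<Longrightarrow> q \<le> q' \<or> q' \<le> q"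
      using C unfolding Chains_def relation_of_def by auto
    ultimately show ?thesis
      using sublinear_chain_lower_bound[of C p] unfolding A_def by blast
  qed
  from predicate_Zorn[OF po this] obtain m where m: "m \<in> A"
    and minimal: "\<And>q. q \<in> A \<Longrightarrow> q \<le> m \<Longrightarrow> q = m" by blast
  have sm: "sublinear m" and mp: "m \<le> p" using m unfolding A_def by auto
  have reduct: "sublinear_reduct m y = m" for y
  proof (rule minimal)
    show le: "sublinear_reduct m y \<le> m"
      using sublinear_reduct_le_self[OF sm] by (simp add: le_fun_def)
    show "sublinear_reduct m y \<in> A"
      using sublinear_sublinear_reduct[OF sm] le mp unfolding A_def by auto
  qed
  have "m x + m y \<le> m (x + y)" for x y
    using sublinear_reduct_add_le[OF sm, of y x] unfolding reduct .
  then have "linear m"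
    by (rule linear_if_sublinear_superadditive[OF sm])
  then show ?thesis using mp by (auto simp: le_fun_def)
qed

lemma exists_norming_functional:
  fixes x0 :: "'a::real_normed_vector"
  shows "\<exists>f. bounded_linear f \<and> f x0 = norm x0"
proof -
  \<comment> \<open>dominating the reduct of the norm in direction \<open>x0\<close>, not the norm itself, forces \<open>f (- x0) \<le> - norm x0\<close>\<close>
  let ?p = "sublinear_reduct norm x0"
  obtain f where f: "linear f" "\<And>x. f x \<le> ?p x"
    using sublinear_dominates_linear[OF sublinear_sublinear_reduct[OF sublinear_norm]] by blast
  have le_norm: "f x \<le> norm x" for x
    using f(2)[of x] sublinear_reduct_le_self[OF sublinear_norm, of x0 x] by linarith
  have "\<bar>f x\<bar> \<le> norm x" for x
    using le_norm[of x] le_norm[of "- x"] linear_neg[OF f(1), of x] by simp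
  then have "bounded_linear f"
    using f(1) by (intro bounded_linear_intro[where K = 1]) (auto simp: linear_add linear_scale)
  moreover have "f (- x0) \<le> - norm x0"
    using f(2)[of "- x0"] sublinear_reduct_add_le[OF sublinear_norm, of x0 "- x0"] by simp
  then have "f x0 = norm x0"
    using le_norm[of x0] linear_neg[OF f(1), of x0] by simp
  ultimately show ?thesis by blast
qed

lemma weakly_converges_unique:
  fixes a b :: "'a::real_normed_vector"
  assumes "weakly_converges xs a" "weakly_converges xs b"
  shows "a = b"
proof -
  obtain f where f: "bounded_linear f" "f (a - b) = norm (a - b)"
    using exists_norming_functional by blast
  have "(\<lambda>n. f (xs n)) \<longlonglongrightarrow> f a" "(\<lambda>n. f (xs n)) \<longlonglongrightarrow> f b"
    using assms f(1) unfolding weakly_converges_def by auto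
  then have "f a = f b" by (rule LIMSEQ_unique)
  then show ?thesis using f by (simp add: linear_diff bounded_linear.linear)
qed

lemma tendsto_imp_weakly_converges: "xs \<longlonglongrightarrow> a \<Longrightarrow> weakly_converges xs a"
  unfolding weakly_converges_def using bounded_linear.tendsto by blast

section \<open>Hausdorff semi-distance and Kuratowski measure\<close>

lemma hsemidist_nonneg: "0 \<le> hsemidist A C"
proof (cases "A = {}")
  case False
  then obtain a where "a \<in> A" by blast
  then show ?thesis unfolding hsemidist_def by (auto intro!: SUP_upper2[of a] simp: infdist_nonneg)
qed (simp add: hsemidist_def)

lemma tendsto_hsemidist_zero_iff:
  "((\<lambda>t. hsemidist (S t) C) \<longlongrightarrow> 0) F \<longleftrightarrow> (\<forall>e>0. \<forall>\<^sub>F t in F. \<forall>a\<in>S t. infdist a C < e)"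
proof
  assume lim: "((\<lambda>t. hsemidist (S t) C) \<longlongrightarrow> 0) F"
  show "\<forall>e>0. \<forall>\<^sub>F t in F. \<forall>a\<in>S t. infdist a C < e"
  proof (intro allI impI)
    fix e :: real assume "0 < e"
    have "\<forall>\<^sub>F t in F. hsemidist (S t) C < ereal e"
      using lim by (rule order_tendstoD(2)) (simp add: zero_ereal_def \<open>0 < e\<close>)
    then show "\<forall>\<^sub>F t in F. \<forall>a\<in>S t. infdist a C < e"
      by eventually_elim (auto simp: hsemidist_def split: if_splits dest: SUP_lessD)
  qed
next
  assume near: "\<forall>e>0. \<forall>\<^sub>F t in F. \<forall>a\<in>S t. infdist a C < e"
  show "((\<lambda>t. hsemidist (S t) C) \<longlongrightarrow> 0) F"
  proof (rule order_tendstoI)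
    fix a :: ereal assume "a < 0"
    then have "a < hsemidist (S t) C" for t
      using hsemidist_nonneg by (rule order.strict_trans2)
    then show "\<forall>\<^sub>F t in F. a < hsemidist (S t) C" by simp
  next
    fix a :: ereal assume "0 < a"
    then obtain e where e: "0 < ereal e" "ereal e < a"
      using ereal_dense2 by blast
    then have "0 < e" by (simp add: zero_ereal_def)
    from near \<open>0 < e\<close> have "\<forall>\<^sub>F t in F. \<forall>b\<in>S t. infdist b C < e" by blast
    then show "\<forall>\<^sub>F t in F. hsemidist (S t) C < a"
    proof eventually_elim
      case (elim t)
      then have "hsemidist (S t) C \<le> ereal e"
        using \<open>0 < e\<close> unfolding hsemidist_def by (simp add: SUP_le_iff less_imp_le)
      then show ?case using e(2) by (rule order.strict_trans1)
    qed
  qed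
qed

lemma kuratowski_le_ereal_iff:
  assumes "0 \<le> \<epsilon>"
  shows "kuratowski A \<le> ereal \<epsilon> \<longleftrightarrow>
    (\<forall>\<delta>>\<epsilon>. \<exists>F. finite F \<and> A \<subseteq> \<Union>F \<and> (\<forall>S\<in>F. bounded S \<and> diameter S < \<delta>))"
    (is "_ \<longleftrightarrow> (\<forall>\<delta>>\<epsilon>. ?cover \<delta>)")
proof
  assume le: "kuratowski A \<le> ereal \<epsilon>"
  show "\<forall>\<delta>>\<epsilon>. ?cover \<delta>"
  proof (intro allI impI)
    fix \<delta> assume "\<epsilon> < \<delta>"
    with le have "kuratowski A < ereal \<delta>" by (simp add: le_less_trans)
    then have "\<exists>\<delta>'<\<delta>. ?cover \<delta>'"
      unfolding kuratowski_def Inf_less_iff by auto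
    then obtain \<delta>' F where "\<delta>' < \<delta>" "finite F" "A \<subseteq> \<Union>F" "\<forall>S\<in>F. bounded S \<and> diameter S < \<delta>'"
      by blast
    then show "?cover \<delta>" by (auto intro!: exI[of _ F])
  qed
next
  assume covers: "\<forall>\<delta>>\<epsilon>. ?cover \<delta>"
  show "kuratowski A \<le> ereal \<epsilon>"
  proof (rule dense_ge)
    fix y assume y: "ereal \<epsilon> < y"
    show "kuratowski A \<le> y"
    proof (cases y)
      case (real \<delta>)
      with y assms covers have "0 < \<delta>" "?cover \<delta>" by auto
      then show ?thesis unfolding kuratowski_def real by (auto intro: Inf_lower)
    qed (use y in auto)
  qed
qed

lemma kuratowski_mono: "A \<subseteq> A' \<Longrightarrow> kuratowski A \<le> kuratowski A'"
  unfolding kuratowski_def by (rule Inf_superset_mono) blast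

lemma kuratowski_Un_finite:
  assumes "finite P"
  shows "kuratowski (P \<union> A) \<le> kuratowski A"
  unfolding kuratowski_def
proof (rule Inf_mono)
  fix b assume "b \<in> {ereal \<delta> |\<delta>. \<delta> > 0 \<and>
     (\<exists>F. finite F \<and> A \<subseteq> \<Union>F \<and> (\<forall>S\<in>F. bounded S \<and> diameter S < \<delta>))}"
  then obtain \<delta> F where "b = ereal \<delta>" "\<delta> > 0" "finite F" "A \<subseteq> \<Union>F" "\<forall>S\<in>F. bounded S \<and> diameter S < \<delta>"
    by blast
  moreover have "\<forall>S\<in>(\<lambda>p. {p}) ` P. bounded S \<and> diameter S < \<delta>" using \<open>\<delta> > 0\<close> by auto
  ultimately show "\<exists>a\<in>{ereal \<delta> |\<delta>. \<delta> > 0 \<and>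
     (\<exists>F. finite F \<and> P \<union> A \<subseteq> \<Union>F \<and> (\<forall>S\<in>F. bounded S \<and> diameter S < \<delta>))}. a \<le> b"
    using assms by (intro bexI[of _ b] CollectI exI[of _ \<delta>] conjI exI[of _ "F \<union> (\<lambda>p. {p}) ` P"]) auto
qed

lemma diameter_cball_le:
  fixes a :: "'a::real_normed_vector"
  assumes "0 \<le> r"
  shows "diameter (cball a r) \<le> 2 * r"
proof (rule diameter_le)
  fix x y assume "x \<in> cball a r" "y \<in> cball a r"
  then have "norm (x - a) \<le> r" "norm (a - y) \<le> r"
    by (auto simp: dist_norm norm_minus_commute)
  then show "norm (x - y) \<le> 2 * r"
    using norm_diff_triangle_le[of x a r y r] by simp
qed (use assms in simp)

lemma kuratowski_le_if_near_compact:
  fixes K :: "'a::real_normed_vector set"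
  assumes K: "compact K" "K \<noteq> {}" and r: "0 < r" and near: "\<forall>a\<in>A. infdist a K < r"
  shows "kuratowski A \<le> ereal (4 * r)"
proof -
  obtain k where k: "finite k" "K \<subseteq> (\<Union>x\<in>k. ball x r)"
    using K(1) r unfolding compact_eq_totally_bounded by blast
  have "A \<subseteq> (\<Union>x\<in>k. cball x (2 * r))"
  proof
    fix a assume "a \<in> A"
    have "(INF c\<in>K. dist a c) < r"
      using near \<open>a \<in> A\<close> infdist_notempty[OF K(2)] by simp
    then obtain c where c: "c \<in> K" "dist a c < r"
      by (subst (asm) cINF_less_iff[OF K(2) bdd_below_image_dist]) blast
    moreover obtain x where "x \<in> k" "c \<in> ball x r" using k(2) c(1) by blast
    moreover have "dist x a \<le> dist x c + dist a c"
      using dist_triangle[of x a c] by (simp add: dist_commute)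
    ultimately have "x \<in> k" "a \<in> cball x (2 * r)" by auto
    then show "a \<in> (\<Union>x\<in>k. cball x (2 * r))" by blast
  qed
  moreover have "diameter (cball x (2 * r)) < \<delta>" if "4 * r < \<delta>" for x :: 'a and \<delta>
    using diameter_cball_le[of "2 * r" x] r that by linarith
  ultimately have "\<exists>F. finite F \<and> A \<subseteq> \<Union>F \<and> (\<forall>S\<in>F. bounded S \<and> diameter S < \<delta>)"
    if "4 * r < \<delta>" for \<delta>
    using k(1) that by (intro exI[of _ "(\<lambda>x. cball x (2 * r)) ` k"]) auto
  then show ?thesis
    using r by (simp add: kuratowski_le_ereal_iff)
qed

lemma compact_closure_if_kuratowski_zero:
  fixes A :: "'a::{real_normed_vector, complete_space} set"
  assumes "kuratowski A \<le> 0"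
  shows "compact (closure A)"
  unfolding compact_eq_totally_bounded
proof (intro conjI allI impI)
  show "complete (closure A)" by (simp add: complete_eq_closed)
  fix e :: real assume "0 < e"
  have "\<forall>\<delta>>0. \<exists>F. finite F \<and> A \<subseteq> \<Union>F \<and> (\<forall>S\<in>F. bounded S \<and> diameter S < \<delta>)"
    using assms kuratowski_le_ereal_iff[of 0 A] by (simp add: zero_ereal_def)
  moreover have "e / 2 > 0" using \<open>0 < e\<close> by simp
  ultimately obtain F where F: "finite F" "A \<subseteq> \<Union>F" "\<forall>S\<in>F. bounded S \<and> diameter S < e / 2"
    by blast
  define k where "k = (\<lambda>S. SOME x. x \<in> S) ` F"
  have "A \<subseteq> (\<Union>x\<in>k. cball x (e / 2))"
  proof
    fix a assume "a \<in> A"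
    then obtain S where S: "S \<in> F" "a \<in> S" using F(2) by blast
    then have "(SOME x. x \<in> S) \<in> S" by (metis someI)
    then have "dist (SOME x. x \<in> S) a \<le> diameter S"
      using F(3) S by (intro diameter_bounded_bound) auto
    also have "\<dots> \<le> e / 2" using F(3) S(1) by (simp add: less_imp_le)
    finally show "a \<in> (\<Union>x\<in>k. cball x (e / 2))" using S(1) unfolding k_def by auto
  qed
  then have "closure A \<subseteq> (\<Union>x\<in>k. cball x (e / 2))"
    using F(1) unfolding k_def by (intro closure_minimal closed_UN) auto
  also have "\<dots> \<subseteq> (\<Union>x\<in>k. ball x e)"
    using \<open>0 < e\<close> by (intro UN_mono) auto
  finally show "\<exists>k. finite k \<and> closure A \<subseteq> (\<Union>x\<in>k. ball x e)"
    using F(1) unfolding k_def by blast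
qed

section \<open>Pullback attractors\<close>

lemma pullback_attractor_imp_kappa_contracting:
  fixes \<theta> :: "real \<Rightarrow> 's \<Rightarrow> 's" and \<phi> :: "real \<Rightarrow> 's \<Rightarrow> 'x::real_normed_vector \<Rightarrow> 'x"
  assumes A: "pullback_attractor \<theta> \<phi> A"
  shows "pullback_kappa_contracting \<theta> \<phi>"
  unfolding pullback_kappa_contracting_def
proof (intro allI impI)
  fix \<epsilon> :: real and \<sigma> and D :: "'x set" assume \<epsilon>: "0 < \<epsilon>" and D: "bounded D"
  have K: "compact (A \<sigma>)" "A \<sigma> \<noteq> {}" using A unfolding pullback_attractor_def by blast+
  have "((\<lambda>t. hsemidist (\<phi> t (\<theta> (- t) \<sigma>) ` D) (A \<sigma>)) \<longlongrightarrow> 0) at_top"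
    using A D unfolding pullback_attractor_def by blast
  then have "\<forall>\<^sub>F t in at_top. \<forall>a\<in>\<phi> t (\<theta> (- t) \<sigma>) ` D. infdist a (A \<sigma>) < \<epsilon> / 4"
    using \<epsilon> unfolding tendsto_hsemidist_zero_iff by (meson zero_less_divide_iff zero_less_numeral)
  then have "\<forall>\<^sub>F t in at_top. kuratowski (\<phi> t (\<theta> (- t) \<sigma>) ` D) \<le> ereal \<epsilon>"
  proof eventually_elim
    case (elim t)
    then show ?case using kuratowski_le_if_near_compact[OF K _ elim] \<epsilon> by simp
  qed
  then show "\<exists>T. \<forall>t\<ge>T. kuratowski (\<phi> t (\<theta> (- t) \<sigma>) ` D) \<le> ereal \<epsilon>"
    unfolding eventually_at_top_linorder .
qed

lemma norm_to_weak_continuous_limit_eq: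
  assumes "norm_to_weak_continuous \<phi>" "0 \<le> t" "xs \<longlonglongrightarrow> x" "(\<lambda>n. \<phi> t \<sigma> (xs n)) \<longlonglongrightarrow> y"
  shows "\<phi> t \<sigma> x = y"
  using assms weakly_converges_unique tendsto_imp_weakly_converges
  unfolding norm_to_weak_continuous_def by metis

definition pullback_omega_limit ::
  "(real \<Rightarrow> 's \<Rightarrow> 's) \<Rightarrow> (real \<Rightarrow> 's \<Rightarrow> 'x::real_normed_vector \<Rightarrow> 'x) \<Rightarrow> 's \<Rightarrow> 'x set" where
  "pullback_omega_limit \<theta> \<phi> \<sigma> = {y. \<exists>xs ts. bounded (range xs) \<and> (\<forall>n. 0 \<le> ts n) \<and>
     filterlim ts at_top sequentially \<and> (\<lambda>n. \<phi> (ts n) (\<theta> (- ts n) \<sigma>) (xs n)) \<longlonglongrightarrow> y}"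

locale absorbing_cocycle =
  fixes \<theta> :: "real \<Rightarrow> 's \<Rightarrow> 's" and \<phi> :: "real \<Rightarrow> 's \<Rightarrow> 'x::banach \<Rightarrow> 'x" and B :: "'s \<Rightarrow> 'x set"
  assumes base_flow: "base_flow \<theta>" and cocycle: "cocycle \<theta> \<phi>"
    and absorbing: "pullback_absorbing \<theta> \<phi> B" and nested: "nested \<theta> B"
begin

abbreviation \<Omega> :: "'s \<Rightarrow> 'x set" where
  "\<Omega> \<equiv> pullback_omega_limit \<theta> \<phi>"

lemma flow_add: "\<theta> s (\<theta> t \<sigma>) = \<theta> (s + t) \<sigma>"
  using base_flow unfolding base_flow_def by simp

lemma flow_zero: "\<theta> 0 \<sigma> = \<sigma>"
  using base_flow unfolding base_flow_def by simp

lemma pullback_cocycle: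
  assumes "0 \<le> t" "0 \<le> s"
  shows "\<phi> (t + s) (\<theta> (- s) \<sigma>) x = \<phi> t \<sigma> (\<phi> s (\<theta> (- s) \<sigma>) x)"
proof -
  have "\<phi> (t + s) (\<theta> (- s) \<sigma>) x = \<phi> t (\<theta> s (\<theta> (- s) \<sigma>)) (\<phi> s (\<theta> (- s) \<sigma>) x)"
    using cocycle assms unfolding cocycle_def by blast
  then show ?thesis by (simp add: flow_add flow_zero)
qed

lemma bounded_absorbing: "bounded (B \<sigma>)"
  using absorbing unfolding pullback_absorbing_def by blast

lemma pullback_sequence_eventually_in_image:
  assumes xs: "bounded (range xs)" and ts: "filterlim ts at_top sequentially" and s: "0 \<le> s"
  shows "\<forall>\<^sub>F n in sequentially. \<phi> (ts n) (\<theta> (- ts n) \<sigma>) (xs n) \<in> \<phi> s (\<theta> (- s) \<sigma>) ` B \<sigma>"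
proof -
  obtain T where T: "T \<ge> 0" "\<forall>r\<ge>T. \<phi> r (\<theta> (- r) (\<theta> (- s) \<sigma>)) ` range xs \<subseteq> B (\<theta> (- s) \<sigma>)"
    using absorbing xs unfolding pullback_absorbing_def by blast
  have B: "B (\<theta> (- s) \<sigma>) \<subseteq> B \<sigma>" using nested s unfolding nested_def by blast
  have "\<forall>\<^sub>F n in sequentially. s + T \<le> ts n" using ts by (simp add: filterlim_at_top)
  then show ?thesis
  proof eventually_elim
    case (elim n)
    let ?r = "ts n - s"
    have "\<phi> (ts n) (\<theta> (- ts n) \<sigma>) (xs n) = \<phi> s (\<theta> (- s) \<sigma>) (\<phi> ?r (\<theta> (- ?r) (\<theta> (- s) \<sigma>)) (xs n))"
      using pullback_cocycle[of s ?r "\<theta> (- s) \<sigma>" "xs n"] s T(1) elim by (simp add: flow_add)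
    moreover have "T \<le> ?r" using elim by simp
    then have "\<phi> ?r (\<theta> (- ?r) (\<theta> (- s) \<sigma>)) (xs n) \<in> B \<sigma>"
      using T(2) B by blast
    ultimately show ?case by blast
  qed
qed

lemma kappa_contracting_imp_asymptotically_compact:
  assumes contracting: "pullback_kappa_contracting \<theta> \<phi>"
  shows "pullback_asymptotically_compact \<theta> \<phi>"
  unfolding pullback_asymptotically_compact_def
proof (intro allI impI)
  fix \<sigma> and xs :: "nat \<Rightarrow> 'x" and ts :: "nat \<Rightarrow> real"
  assume xs: "bounded (range xs)" and "\<forall>n. 0 \<le> ts n" and ts: "filterlim ts at_top sequentially"
  let ?z = "\<lambda>n. \<phi> (ts n) (\<theta> (- ts n) \<sigma>) (xs n)"
  have "kuratowski (range ?z) \<le> 0 + ereal e" if "0 < e" for e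
  proof -
    obtain T where T: "\<And>t. T \<le> t \<Longrightarrow> kuratowski (\<phi> t (\<theta> (- t) \<sigma>) ` B \<sigma>) \<le> ereal e"
      using contracting \<open>0 < e\<close> bounded_absorbing[of \<sigma>]
      unfolding pullback_kappa_contracting_def by blast
    define s where "s = max T 0"
    have s: "0 \<le> s" "T \<le> s" by (simp_all add: s_def)
    obtain N where N: "\<And>n. N \<le> n \<Longrightarrow> ?z n \<in> \<phi> s (\<theta> (- s) \<sigma>) ` B \<sigma>"
      using pullback_sequence_eventually_in_image[OF xs ts s(1)]
      unfolding eventually_sequentially by blast
    have "range ?z \<subseteq> ?z ` {..<N} \<union> \<phi> s (\<theta> (- s) \<sigma>) ` B \<sigma>"
    proof (rule image_subsetI)
      fix n show "?z n \<in> ?z ` {..<N} \<union> \<phi> s (\<theta> (- s) \<sigma>) ` B \<sigma>"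
        using N[of n] by (cases "n < N") simp_all
    qed
    then have "kuratowski (range ?z) \<le> kuratowski (?z ` {..<N} \<union> \<phi> s (\<theta> (- s) \<sigma>) ` B \<sigma>)"
      by (rule kuratowski_mono)
    also have "\<dots> \<le> kuratowski (\<phi> s (\<theta> (- s) \<sigma>) ` B \<sigma>)"
      by (rule kuratowski_Un_finite) simp
    also have "\<dots> \<le> ereal e"
      using T s(2) .
    finally show ?thesis by simp
  qed
  then have "kuratowski (range ?z) \<le> 0"
    by (rule ereal_le_epsilon2)
  then show "compact (closure (range ?z))"
    by (rule compact_closure_if_kuratowski_zero)
qed

lemma omega_limit_approx:
  assumes y: "y \<in> \<Omega> \<sigma>" and s: "0 \<le> s" and e: "0 < e"
  shows "\<exists>x\<in>B \<sigma>. dist (\<phi> s (\<theta> (- s) \<sigma>) x) y < e"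
proof -
  obtain xs ts where xs: "bounded (range xs)" and ts: "filterlim ts at_top sequentially"
    and lim: "(\<lambda>n. \<phi> (ts n) (\<theta> (- ts n) \<sigma>) (xs n)) \<longlonglongrightarrow> y"
    using y unfolding pullback_omega_limit_def by blast
  have "\<forall>\<^sub>F n in sequentially. \<phi> (ts n) (\<theta> (- ts n) \<sigma>) (xs n) \<in> \<phi> s (\<theta> (- s) \<sigma>) ` B \<sigma> \<and>
      dist (\<phi> (ts n) (\<theta> (- ts n) \<sigma>) (xs n)) y < e"
    using pullback_sequence_eventually_in_image[OF xs ts s] tendstoD[OF lim e] by (rule eventually_conj)
  then obtain n where n: "\<phi> (ts n) (\<theta> (- ts n) \<sigma>) (xs n) \<in> \<phi> s (\<theta> (- s) \<sigma>) ` B \<sigma>"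
    "dist (\<phi> (ts n) (\<theta> (- ts n) \<sigma>) (xs n)) y < e"
    using eventually_happens'[OF sequentially_bot] by blast
  then show ?thesis by force
qed

end

locale asymptotically_compact_cocycle = absorbing_cocycle \<theta> \<phi> B
  for \<theta> :: "real \<Rightarrow> 's \<Rightarrow> 's" and \<phi> :: "real \<Rightarrow> 's \<Rightarrow> 'x::banach \<Rightarrow> 'x" and B +
  assumes asymptotically_compact: "pullback_asymptotically_compact \<theta> \<phi>"
begin

lemma pullback_convergent_subseq:
  assumes xs: "bounded (range xs)" and ts0: "\<forall>n. 0 \<le> ts n" and ts: "filterlim ts at_top sequentially"
  obtains r y where "strict_mono r" "(\<lambda>n. \<phi> (ts (r n)) (\<theta> (- ts (r n)) \<sigma>) (xs (r n))) \<longlonglongrightarrow> y"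
    "y \<in> \<Omega> \<sigma>"
proof -
  let ?z = "\<lambda>n. \<phi> (ts n) (\<theta> (- ts n) \<sigma>) (xs n)"
  have "compact (closure (range ?z))"
    using asymptotically_compact xs ts0 ts unfolding pullback_asymptotically_compact_def by blast
  then have "seq_compact (closure (range ?z))" by (rule compact_imp_seq_compact)
  moreover have "\<forall>n. ?z n \<in> closure (range ?z)" by (simp add: closure_def)
  ultimately obtain y r where r: "strict_mono r" and lim: "(?z \<circ> r) \<longlonglongrightarrow> y"
    by (rule seq_compactE)
  have "bounded (range (\<lambda>n. xs (r n)))" using xs by (rule bounded_subset) auto
  moreover have "filterlim (\<lambda>n. ts (r n)) at_top sequentially"
    using filterlim_compose[OF ts filterlim_subseq[OF r]] by (simp add: o_def)
  moreover have "\<forall>n. 0 \<le> ts (r n)" using ts0 by simp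
  ultimately have "y \<in> \<Omega> \<sigma>"
    using lim unfolding pullback_omega_limit_def o_def
    by (intro CollectI exI[of _ "\<lambda>n. xs (r n)"] exI[of _ "\<lambda>n. ts (r n)"] conjI)
  with r lim show ?thesis by (intro that) (simp_all add: o_def)
qed

lemma omega_limit_nonempty: "\<Omega> \<sigma> \<noteq> {}"
proof -
  obtain r y where "y \<in> \<Omega> \<sigma>"
    by (rule pullback_convergent_subseq[of "\<lambda>_. 0" real]) (auto simp: filterlim_real_sequentially)
  then show ?thesis by blast
qed

lemma omega_limit_compact: "compact (\<Omega> \<sigma>)"
  unfolding compact_eq_seq_compact_metric seq_compact_def
proof (intro allI impI)
  fix f :: "nat \<Rightarrow> 'x" assume f: "\<forall>n. f n \<in> \<Omega> \<sigma>"
  let ?z = "\<lambda>x n. \<phi> (real n) (\<theta> (- real n) \<sigma>) x"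
  have "\<exists>x\<in>B \<sigma>. dist (?z x n) (f n) < inverse (real (Suc n))" for n
    using omega_limit_approx f by simp
  then obtain xs where xs: "\<And>n. xs n \<in> B \<sigma>"
    and close: "\<And>n. dist (?z (xs n) n) (f n) < inverse (real (Suc n))"
    by metis
  have "bounded (range xs)"
    using bounded_absorbing by (rule bounded_subset) (use xs in blast)
  then obtain r y where r: "strict_mono r" and lim: "(\<lambda>n. ?z (xs (r n)) (r n)) \<longlonglongrightarrow> y"
    and y: "y \<in> \<Omega> \<sigma>"
    by (rule pullback_convergent_subseq[where ts = real]) (simp_all add: filterlim_real_sequentially)
  have bound: "norm (f (r n) - ?z (xs (r n)) (r n)) \<le> inverse (real (Suc n))" for n
  proof -
    have "norm (f (r n) - ?z (xs (r n)) (r n)) < inverse (real (Suc (r n)))"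
      using close[of "r n"] by (simp add: dist_norm norm_minus_commute)
    moreover have "inverse (real (Suc (r n))) \<le> inverse (real (Suc n))"
      using seq_suble[OF r, of n] by (simp add: le_imp_inverse_le)
    ultimately show ?thesis by linarith
  qed
  have "(\<lambda>n. f (r n) - ?z (xs (r n)) (r n)) \<longlonglongrightarrow> 0"
    using bound by (intro Lim_null_comparison[OF always_eventually LIMSEQ_inverse_real_of_nat]) simp
  with lim have "(f \<circ> r) \<longlonglongrightarrow> y"
    unfolding o_def by (rule Lim_transform)
  with r y show "\<exists>l\<in>\<Omega> \<sigma>. \<exists>r. strict_mono r \<and> (f \<circ> r) \<longlonglongrightarrow> l" by blast
qed

lemma omega_limit_attracts:
  assumes D: "bounded D" and e: "0 < e"
  shows "\<forall>\<^sub>F t in at_top. \<forall>a\<in>\<phi> t (\<theta> (- t) \<sigma>) ` D. infdist a (\<Omega> \<sigma>) < e"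
proof (rule ccontr)
  assume "\<not> ?thesis"
  then have "\<exists>t\<ge>real n. \<exists>x\<in>D. e \<le> infdist (\<phi> t (\<theta> (- t) \<sigma>) x) (\<Omega> \<sigma>)" for n
    unfolding eventually_at_top_linorder by (auto simp: not_less)
  then obtain ts xs where ts: "\<And>n. real n \<le> ts n" and xs: "\<And>n. xs n \<in> D"
    and far: "\<And>n. e \<le> infdist (\<phi> (ts n) (\<theta> (- ts n) \<sigma>) (xs n)) (\<Omega> \<sigma>)"
    by metis
  have "bounded (range xs)" using D by (rule bounded_subset) (use xs in blast)
  moreover have "\<forall>n. 0 \<le> ts n" using ts by (meson of_nat_0_le_iff order_trans)
  moreover have "filterlim ts at_top sequentially"
    using filterlim_real_sequentially by (rule filterlim_at_top_mono) (simp add: ts)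
  ultimately obtain r y where lim: "(\<lambda>n. \<phi> (ts (r n)) (\<theta> (- ts (r n)) \<sigma>) (xs (r n))) \<longlonglongrightarrow> y"
    and y: "y \<in> \<Omega> \<sigma>"
    by (rule pullback_convergent_subseq)
  have "(\<lambda>n. infdist (\<phi> (ts (r n)) (\<theta> (- ts (r n)) \<sigma>) (xs (r n))) (\<Omega> \<sigma>)) \<longlonglongrightarrow> infdist y (\<Omega> \<sigma>)"
    using lim by (rule tendsto_infdist)
  then have "e \<le> infdist y (\<Omega> \<sigma>)"
    using far by (intro LIMSEQ_le_const) auto
  with y e show False by simp
qed

lemma omega_limit_image_subset:
  assumes nw: "norm_to_weak_continuous \<phi>" and t: "0 \<le> t" and y: "y \<in> \<Omega> \<sigma>"
  shows "\<phi> t \<sigma> y \<in> \<Omega> (\<theta> t \<sigma>)"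
proof -
  obtain xs ts where xs: "bounded (range xs)" and ts0: "\<forall>n. 0 \<le> ts n"
    and ts: "filterlim ts at_top sequentially" and lim: "(\<lambda>n. \<phi> (ts n) (\<theta> (- ts n) \<sigma>) (xs n)) \<longlonglongrightarrow> y"
    using y unfolding pullback_omega_limit_def by blast
  have shift: "\<phi> (t + ts n) (\<theta> (- (t + ts n)) (\<theta> t \<sigma>)) (xs n) = \<phi> t \<sigma> (\<phi> (ts n) (\<theta> (- ts n) \<sigma>) (xs n))"
    for n using pullback_cocycle[OF t, of "ts n" \<sigma> "xs n"] ts0 by (simp add: flow_add)
  have "\<forall>n. 0 \<le> t + ts n" using t ts0 by simp
  moreover have "filterlim (\<lambda>n. t + ts n) at_top sequentially"
    by (rule filterlim_tendsto_add_at_top[OF tendsto_const ts])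
  ultimately obtain r v where r: "strict_mono r"
    and conv_shifted: "(\<lambda>n. \<phi> (t + ts (r n)) (\<theta> (- (t + ts (r n))) (\<theta> t \<sigma>)) (xs (r n))) \<longlonglongrightarrow> v"
    and v: "v \<in> \<Omega> (\<theta> t \<sigma>)"
    by (rule pullback_convergent_subseq[OF xs])
  from conv_shifted have conv: "(\<lambda>n. \<phi> t \<sigma> (\<phi> (ts (r n)) (\<theta> (- ts (r n)) \<sigma>) (xs (r n)))) \<longlonglongrightarrow> v"
    unfolding shift .
  have "(\<lambda>n. \<phi> (ts (r n)) (\<theta> (- ts (r n)) \<sigma>) (xs (r n))) \<longlonglongrightarrow> y"
    using LIMSEQ_subseq_LIMSEQ[OF lim r] by (simp add: o_def)
  then have "\<phi> t \<sigma> y = v"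
    using nw t conv by (intro norm_to_weak_continuous_limit_eq)
  with v show ?thesis by simp
qed

lemma omega_limit_subset_image:
  assumes nw: "norm_to_weak_continuous \<phi>" and t: "0 \<le> t" and v: "v \<in> \<Omega> (\<theta> t \<sigma>)"
  shows "v \<in> \<phi> t \<sigma> ` \<Omega> \<sigma>"
proof -
  obtain xs ts where xs: "bounded (range xs)" and ts: "filterlim ts at_top sequentially"
    and lim: "(\<lambda>n. \<phi> (ts n) (\<theta> (- ts n) (\<theta> t \<sigma>)) (xs n)) \<longlonglongrightarrow> v"
    using v unfolding pullback_omega_limit_def by blast
  \<comment> \<open>the cut-off at \<open>0\<close> only affects the finitely many \<open>n\<close> with \<open>ts n < t\<close>\<close>
  define ts' where "ts' n = max (ts n - t) 0" for n
  have shift: "\<phi> t \<sigma> (\<phi> (ts' n) (\<theta> (- ts' n) \<sigma>) (xs n)) = \<phi> (ts n) (\<theta> (- ts n) (\<theta> t \<sigma>)) (xs n)"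
    if "t \<le> ts n" for n
    using pullback_cocycle[OF t, of "ts n - t" \<sigma> "xs n"] that by (simp add: ts'_def flow_add)
  have "\<forall>n. 0 \<le> ts' n" by (simp add: ts'_def)
  moreover have "filterlim ts' at_top sequentially"
    using filterlim_tendsto_add_at_top[OF tendsto_const[of "- t"] ts]
    by (rule filterlim_at_top_mono) (simp add: ts'_def)
  ultimately obtain r y where r: "strict_mono r"
    and conv: "(\<lambda>n. \<phi> (ts' (r n)) (\<theta> (- ts' (r n)) \<sigma>) (xs (r n))) \<longlonglongrightarrow> y"
    and y: "y \<in> \<Omega> \<sigma>"
    by (rule pullback_convergent_subseq[OF xs])
  have "\<forall>\<^sub>F n in sequentially. t \<le> ts (r n)"
    using filterlim_compose[OF ts filterlim_subseq[OF r]] by (simp add: filterlim_at_top)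
  then have "\<forall>\<^sub>F n in sequentially. \<phi> (ts (r n)) (\<theta> (- ts (r n)) (\<theta> t \<sigma>)) (xs (r n)) =
      \<phi> t \<sigma> (\<phi> (ts' (r n)) (\<theta> (- ts' (r n)) \<sigma>) (xs (r n)))"
    by eventually_elim (rule shift[symmetric])
  with LIMSEQ_subseq_LIMSEQ[OF lim r]
  have "(\<lambda>n. \<phi> t \<sigma> (\<phi> (ts' (r n)) (\<theta> (- ts' (r n)) \<sigma>) (xs (r n)))) \<longlonglongrightarrow> v"
    unfolding o_def by (rule Lim_transform_eventually)
  then have "\<phi> t \<sigma> y = v"
    using nw t conv by (intro norm_to_weak_continuous_limit_eq)
  with y show ?thesis by blast
qed

lemma pullback_attractor_omega_limit:
  assumes "norm_to_weak_continuous \<phi>"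
  shows "pullback_attractor \<theta> \<phi> \<Omega>"
  unfolding pullback_attractor_def tendsto_hsemidist_zero_iff
proof (intro conjI allI impI)
  fix t :: real and \<sigma> assume "0 \<le> t"
  then show "\<phi> t \<sigma> ` \<Omega> \<sigma> = \<Omega> (\<theta> t \<sigma>)"
    using omega_limit_image_subset[OF assms] omega_limit_subset_image[OF assms]
    by (intro equalityI image_subsetI subsetI)
qed (use omega_limit_nonempty omega_limit_compact omega_limit_attracts in blast)+

end

theorem theorem3p13:
  fixes \<theta> :: "real \<Rightarrow> 's \<Rightarrow> 's"
    and \<phi> :: "real \<Rightarrow> 's \<Rightarrow> 'x::banach \<Rightarrow> 'x"
  assumes "base_flow \<theta>"
    and "cocycle \<theta> \<phi>"
    and "norm_to_weak_continuous \<phi>"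
    and "\<exists>B. pullback_absorbing \<theta> \<phi> B \<and> nested \<theta> B"
  shows "((\<exists>A. pullback_attractor \<theta> \<phi> A) \<longleftrightarrow> pullback_kappa_contracting \<theta> \<phi>) \<and>
         (pullback_kappa_contracting \<theta> \<phi> \<longleftrightarrow> pullback_asymptotically_compact \<theta> \<phi>)"
proof -
  obtain B where B: "pullback_absorbing \<theta> \<phi> B" "nested \<theta> B" using assms(4) by blast
  interpret absorbing_cocycle \<theta> \<phi> B using assms(1,2) B by unfold_locales
  have "pullback_attractor \<theta> \<phi> (pullback_omega_limit \<theta> \<phi>)"
    if "pullback_asymptotically_compact \<theta> \<phi>"
  proof -
    interpret asymptotically_compact_cocycle \<theta> \<phi> B using that by unfold_locales
    show ?thesis using pullback_attractor_omega_limit[OF assms(3)] .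
  qed
  then show ?thesis
    using pullback_attractor_imp_kappa_contracting kappa_contracting_imp_asymptotically_compact
    by blast
qed

end
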